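(* Let $\ell\in\{1,\dots,L\}$ and assume the asymptotic quadratic-Lipschitz condition on $\mathcal G^{(\ell)}$. If $(Q_{1,n},Q_{2,n})\to(Q_1,Q_2)$ in $\mathcal S^+_{D_\ell}\times\mathcal S_{D_{\ell+1}}$, then $\liminf_{n\to\infty}I_\ell(Q_{2,n}\mid Q_{1,n})\ge I_\ell(Q_2\mid Q_1)$.
   Context: $\mathcal S^+_D$ denotes the symmetric positive semidefinite $D\times D$ real matrices, $\mathcal S_D$ the symmetric ones, $\sqrt Q$ the positive semidefinite square root, $\|\cdot\|_2$ the Euclidean norm and $\|\cdot\|_F$ the Frobenius norm. $\mathcal G^{(\ell)}:\mathbb R^{D_\ell}\to\mathcal S^+_{D_{\ell+1}}$ is a map. Asymptotic quadratic-Lipschitz condition: $\mathcal G^{(\ell)}$ is continuous and for every $\varepsilon>0$ there is $C_\varepsilon>0$ such that for all $z,z'\in\mathbb R^{D_\ell}$, $\|\mathcal G^{(\ell)}(z)-\mathcal G^{(\ell)}(z')\|_F\le C_\varepsilon[1+\|z-z'\|_2(\|z\|_2+\|z'\|_2)]+\varepsilon(\|z\|_2^2+\|z'\|_2^2)$. For $Q_1\in\mathcal S^+_{D_\ell}$, $Q_0\in\mathbb R^{D_{\ell+1}\times D_{\ell+1}}$: $M_\ell(Q_0\mid Q_1)=\mathbf E[\exp(\operatorname{tr}(Q_0^\top\mathcal G^{(\ell)}(\sqrt{Q_1}Z)))]$ with $Z\sim\mathcal N(\mathbf 0,\mathbf I_{D_\ell})$, and $I_\ell(Q_2\mid Q_1)=\sup_{Q_0\in\mathcal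 S_{D_{\ell+1}}}\{\operatorname{tr}(Q_0^\top Q_2)-\log M_\ell(Q_0\mid Q_1)\}$ for $Q_2\in\mathcal S_{D_{\ell+1}}$. *)

theory Defs
  imports "HOL-Analysis.Analysis" "HOL-Probability.Probability"
begin

definition sym_mats :: "(real^'n^'n) set" where
  "sym_mats = {A. transpose A = A}"

definition psd_mats :: "(real^'n^'n) set" where
  "psd_mats = {A. transpose A = A \<and> (\<forall>x. 0 \<le> x \<bullet> (A *v x))}"

text \<open>Positive semidefinite square root (unique for PSD arguments).\<close>
definition psd_sqrt :: "real^'n^'n \<Rightarrow> real^'n^'n" where
  "psd_sqrt Q = (THE S. S \<in> psd_mats \<and> S ** S = Q)"

definition frob_norm :: "real^'n^'m \<Rightarrow> real" where
  "frob_norm A = sqrt (\<Sum>i\<in>UNIV. \<Sum>j\<in>UNIV. (A $ i $ j)^2)"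

definition std_gauss :: "(real^'d) measure" where
  "std_gauss = density lborel
     (\<lambda>z. ennreal ((2 * pi) powr (- real CARD('d) / 2) * exp (- (norm z * norm z) / 2)))"

definition asym_quad_lipschitz :: "(real^'d \<Rightarrow> real^'e^'e) \<Rightarrow> bool" where
  "asym_quad_lipschitz G \<longleftrightarrow> continuous_on UNIV G \<and>
     (\<forall>\<epsilon>>0. \<exists>C>0. \<forall>z z'. frob_norm (G z - G z') \<le>
        C * (1 + norm (z - z') * (norm z + norm z')) + \<epsilon> * ((norm z)^2 + (norm z')^2))"

definition mgf_M :: "(real^'d \<Rightarrow> real^'e^'e) \<Rightarrow> real^'e^'e \<Rightarrow> real^'d^'d \<Rightarrow> ennreal" where
  "mgf_M G Q0 Q1 = (\<integral>\<^sup>+ z. ennreal (exp (trace (transpose Q0 ** G (psd_sqrt Q1 *v z)))) \<partial>std_gauss)"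

definition ereal_log :: "ennreal \<Rightarrow> ereal" where
  "ereal_log x = (if x = \<infinity> then \<infinity> else if x = 0 then -\<infinity> else ereal (ln (enn2real x)))"

definition rate_I :: "(real^'d \<Rightarrow> real^'e^'e) \<Rightarrow> real^'e^'e \<Rightarrow> real^'d^'d \<Rightarrow> ereal" where
  "rate_I G Q2 Q1 = (SUP Q0\<in>sym_mats. ereal (trace (transpose Q0 ** Q2)) - ereal_log (mgf_M G Q0 Q1))"

end

theory Submission
  imports Defs
begin

(* Fix a symmetric Q0; it suffices to bound tr(Q0 Q2) - log M(Q0 | Q1) by the liminf, and only the
   case M(Q0 | Q1) < infinity matters. For 0 < t < 1, the asymptotic quadratic-Lipschitz condition
   with a small epsilon and the convexity of exp dominate the integrand of M(t Q0 | Q1n) by a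
   constant times exp(t u(z) + (1 - t) |z|^2 / 4), where exp u is the integrand of M(Q0 | Q1);
   this is Gaussian-integrable. Since the PSD square root is continuous (it is the inverse of the
   injective squaring map on compact sets of PSD matrices), dominated convergence gives
   M(t Q0 | Q1n) --> M(t Q0 | Q1). Testing I(Q2n | Q1n) with t Q0 then yields
     liminf I(Q2n | Q1n) >= t tr(Q0 Q2) - log M(t Q0 | Q1)
                         >= t tr(Q0 Q2) - log (t M(Q0 | Q1) + (1 - t) gamma),
   gamma being the total mass of the Gaussian measure, again by convexity of exp; let t --> 1. *)

section \<open>Positive semidefinite square roots\<close>

lemma transpose_add: "transpose (A + B) = transpose A + transpose (B :: 'a::semiring_1^'n^'m)"
  by (simp add: transpose_def vec_eq_iff)

lemma transpose_diff: "transpose (A - B) = transpose A - transpose (B :: 'a::ring_1^'n^'m)"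
  by (simp add: transpose_def vec_eq_iff)

lemma symmetric_matrix_inner_commute:
  fixes A :: "real^'n^'n"
  assumes "transpose A = A"
  shows "x \<bullet> (A *v y) = (A *v x) \<bullet> y"
  by (metis assms dot_lmul_matrix transpose_matrix_vector)

lemma linear_coeff_eq_0_if_quadratic_nonneg:
  fixes a b :: real
  assumes nonneg: "\<And>s. 0 \<le> 2 * s * a + s\<^sup>2 * b"
  shows "a = 0"
proof -
  define c where "c = \<bar>b\<bar> + 1"
  have c: "c > 0" "b - 2 * c < 0" by (simp_all add: c_def)
  have "0 \<le> (2 * (- a / c) * a + (- a / c)\<^sup>2 * b) * c\<^sup>2"
    using nonneg[of "- a / c"] by simp
  also have "\<dots> = a\<^sup>2 * (b - 2 * c)"
    using c by (simp add: power2_eq_square field_simps)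
  finally show ?thesis using c by (simp add: zero_le_mult_iff)
qed

lemma psd_mats_form_eq_0_imp:
  fixes S :: "real^'n^'n"
  assumes S: "S \<in> psd_mats" and x: "x \<bullet> (S *v x) = 0"
  shows "S *v x = 0"
proof -
  have symS: "transpose S = S" and pos: "\<And>z. 0 \<le> z \<bullet> (S *v z)"
    using S by (auto simp: psd_mats_def)
  have "(S *v x) \<bullet> (S *v x) = 0"
  proof (rule linear_coeff_eq_0_if_quadratic_nonneg)
    fix s :: real
    let ?y = "S *v x"
    have "x \<bullet> (S *v ?y) = ?y \<bullet> ?y"
      by (simp add: symmetric_matrix_inner_commute[OF symS])
    then have "(x + s *\<^sub>R ?y) \<bullet> (S *v (x + s *\<^sub>R ?y)) = 2 * s * (?y \<bullet> ?y) + s\<^sup>2 * (?y \<bullet> (S *v ?y))"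
      by (simp add: x inner_commute power2_eq_square algebra_simps)
    with pos show "0 \<le> 2 * s * (?y \<bullet> ?y) + s\<^sup>2 * (?y \<bullet> (S *v ?y))" by metis
  qed
  then show ?thesis by simp
qed

lemma rayleigh_quotient_max_exists:
  fixes A :: "real^'n^'n"
  assumes V: "subspace V" and v: "v \<in> V" "v \<noteq> 0"
  shows "\<exists>x\<in>V. norm x = 1 \<and> (\<forall>y\<in>V. y \<bullet> (A *v y) \<le> (x \<bullet> (A *v x)) * (y \<bullet> y))"
proof -
  define K where "K = sphere (0::real^'n) 1 \<inter> V"
  have "compact K" unfolding K_def
    by (intro compact_Int_closed compact_sphere closed_subspace V)
  moreover have "(1 / norm v) *\<^sub>R v \<in> K" using v V by (simp add: K_def subspace_scale)
  then have "K \<noteq> {}" by blast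
  moreover have "continuous_on K (\<lambda>y. y \<bullet> (A *v y))"
    by (intro continuous_intros continuous_on_compose2[OF matrix_vector_mult_linear_continuous_on]) auto
  ultimately obtain x where xK: "x \<in> K" and xmax: "\<And>y. y \<in> K \<Longrightarrow> y \<bullet> (A *v y) \<le> x \<bullet> (A *v x)"
    using continuous_attains_sup by metis
  have "y \<bullet> (A *v y) \<le> (x \<bullet> (A *v x)) * (y \<bullet> y)" if y: "y \<in> V" for y
  proof (cases "y = 0")
    case False
    define u where "u = (1 / norm y) *\<^sub>R y"
    have "u \<in> K" using False y V by (simp add: K_def u_def subspace_scale)
    moreover have "u \<bullet> (A *v u) = (y \<bullet> (A *v y)) / (y \<bullet> y)"
      by (simp add: u_def matrix_vector_mult_scaleR dot_square_norm power2_eq_square)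
    ultimately have "(y \<bullet> (A *v y)) / (y \<bullet> y) \<le> x \<bullet> (A *v x)" using xmax by metis
    then show ?thesis using False by (simp add: divide_le_eq)
  qed simp
  then show ?thesis using xK by (auto simp: K_def)
qed

text \<open>Along \<open>x + s w\<close>, with \<open>w\<close> the component of \<open>A x\<close> orthogonal to \<open>x\<close>, the Rayleigh
  quotient would otherwise grow at first order.\<close>
lemma rayleigh_quotient_max_eigenvector:
  fixes A :: "real^'n^'n"
  assumes symA: "transpose A = A" and V: "subspace V" and inv: "\<And>y. y \<in> V \<Longrightarrow> A *v y \<in> V"
    and xV: "x \<in> V" and nx: "norm x = 1"
    and xmax: "\<And>y. y \<in> V \<Longrightarrow> y \<bullet> (A *v y) \<le> (x \<bullet> (A *v x)) * (y \<bullet> y)"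
  shows "A *v x = (x \<bullet> (A *v x)) *\<^sub>R x"
proof -
  define \<mu> where "\<mu> = x \<bullet> (A *v x)"
  define w where "w = A *v x - \<mu> *\<^sub>R x"
  have wV: "w \<in> V" unfolding w_def using xV inv V by (intro subspace_diff subspace_scale) auto
  have xx: "x \<bullet> x = 1" using nx by (simp add: dot_square_norm)
  have xw: "x \<bullet> w = 0" unfolding w_def \<mu>_def by (simp add: inner_diff_right xx)
  then have wx: "w \<bullet> x = 0" by (simp add: inner_commute)
  have wAx: "w \<bullet> (A *v x) = w \<bullet> w"
    using xw by (simp add: w_def inner_diff_left inner_diff_right inner_commute)
  have xAw: "x \<bullet> (A *v w) = w \<bullet> w"
    using symmetric_matrix_inner_commute[OF symA, of x w] wAx by (metis inner_commute)
  have "- (w \<bullet> w) = 0"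
  proof (rule linear_coeff_eq_0_if_quadratic_nonneg)
    fix s :: real
    define z where "z = x + s *\<^sub>R w"
    have "z \<in> V" unfolding z_def using xV wV V by (intro subspace_add subspace_scale) auto
    then have "0 \<le> \<mu> * (z \<bullet> z) - z \<bullet> (A *v z)" using xmax by (simp add: \<mu>_def)
    also have "\<dots> = 2 * s * (- (w \<bullet> w)) + s\<^sup>2 * (\<mu> * (w \<bullet> w) - w \<bullet> (A *v w))"
      by (simp add: z_def xx xw wx wAx xAw \<mu>_def power2_eq_square algebra_simps)
    finally show "0 \<le> 2 * s * (- (w \<bullet> w)) + s\<^sup>2 * (\<mu> * (w \<bullet> w) - w \<bullet> (A *v w))" .
  qed
  then show ?thesis by (simp add: w_def \<mu>_def)
qed

lemma symmetric_matrix_top_eigenvector: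
  fixes A :: "real^'n^'n"
  assumes symA: "transpose A = A" and V: "subspace V" and inv: "\<And>y. y \<in> V \<Longrightarrow> A *v y \<in> V"
    and v: "v \<in> V" "v \<noteq> 0"
  obtains x where "x \<in> V" "norm x = 1" "A *v x = (x \<bullet> (A *v x)) *\<^sub>R x"
    "\<And>y. y \<in> V \<Longrightarrow> y \<bullet> (A *v y) \<le> (x \<bullet> (A *v x)) * (y \<bullet> y)"
  using rayleigh_quotient_max_exists[OF V v, of A] rayleigh_quotient_max_eigenvector[OF symA V inv]
  by blast

definition outer_prod :: "real^'n \<Rightarrow> real^'n^'n" where
  "outer_prod v = (\<chi> i j. v $ i * v $ j)"

lemma outer_prod_mult: "outer_prod v *v y = (v \<bullet> y) *\<^sub>R v"
  by (simp add: outer_prod_def matrix_vector_mult_def inner_vec_def vec_eq_iff sum_distrib_left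
      algebra_simps)

lemma transpose_outer_prod: "transpose (outer_prod v) = outer_prod v"
  by (simp add: outer_prod_def transpose_def vec_eq_iff)

text \<open>Vanishing on the orthogonal complement of \<open>V\<close> keeps the rank-one term added for a further
  eigenvector in \<open>psd_sqrt_on_extend\<close> from interacting with \<open>S\<close>.\<close>
definition psd_sqrt_on :: "(real^'n) set \<Rightarrow> real^'n^'n \<Rightarrow> real^'n^'n \<Rightarrow> bool" where
  "psd_sqrt_on V A S \<longleftrightarrow> S \<in> psd_mats \<and> (\<forall>y\<in>V. S *v (S *v y) = A *v y)
     \<and> (\<forall>z. (\<forall>v\<in>V. v \<bullet> z = 0) \<longrightarrow> S *v z = 0)"

lemma psd_sqrt_on_extend:
  fixes A S :: "real^'n^'n"
  assumes V: "subspace V" and xV: "x \<in> V" and nx: "norm x = 1"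
    and Ax: "A *v x = \<mu> *\<^sub>R x" and \<mu>: "\<mu> \<ge> 0"
    and S: "psd_sqrt_on {y\<in>V. x \<bullet> y = 0} A S"
  shows "psd_sqrt_on V A (S + sqrt \<mu> *\<^sub>R outer_prod x)"
proof -
  define S\<^sub>x where "S\<^sub>x = S + sqrt \<mu> *\<^sub>R outer_prod x"
  have Spsd: "S \<in> psd_mats" and sqS: "\<And>y. y \<in> V \<Longrightarrow> x \<bullet> y = 0 \<Longrightarrow> S *v (S *v y) = A *v y"
    and kerS: "\<And>z. \<forall>v\<in>V. x \<bullet> v = 0 \<longrightarrow> v \<bullet> z = 0 \<Longrightarrow> S *v z = 0"
    using S by (auto simp: psd_sqrt_on_def)
  have symS: "transpose S = S" and posS: "\<And>z. 0 \<le> z \<bullet> (S *v z)"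
    using Spsd by (auto simp: psd_mats_def)
  have xx: "x \<bullet> x = 1" using nx by (simp add: dot_square_norm)
  have Sx: "S *v x = 0" using kerS by (simp add: inner_commute)
  have Sxz: "S\<^sub>x *v z = S *v z + (sqrt \<mu> * (x \<bullet> z)) *\<^sub>R x" for z
    by (simp add: S\<^sub>x_def matrix_vector_mult_add_rdistrib scaleR_matrix_vector_assoc[symmetric] outer_prod_mult)
  have "S\<^sub>x \<in> psd_mats"
  proof -
    have "transpose S\<^sub>x = S\<^sub>x"
      by (simp add: S\<^sub>x_def transpose_add transpose_scalar transpose_outer_prod symS)
    moreover have "z \<bullet> (S\<^sub>x *v z) = z \<bullet> (S *v z) + sqrt \<mu> * (x \<bullet> z)\<^sup>2" for z
      by (simp add: Sxz inner_add_right power2_eq_square) (simp add: inner_commute)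
    ultimately show ?thesis using posS \<mu> by (simp add: psd_mats_def)
  qed
  moreover have "S\<^sub>x *v (S\<^sub>x *v y) = A *v y" if yV: "y \<in> V" for y
  proof -
    define y' where "y' = y - (x \<bullet> y) *\<^sub>R x"
    have y'V: "y' \<in> V" and xy': "x \<bullet> y' = 0"
      using yV xV V by (auto intro!: subspace_diff subspace_scale simp: y'_def inner_diff_right xx)
    have "S *v y = S *v y'"
      by (simp add: y'_def matrix_vector_mult_diff_distrib matrix_vector_mult_scaleR Sx)
    moreover have "x \<bullet> (S *v y) = 0"
      using symmetric_matrix_inner_commute[OF symS, of x y] by (simp add: Sx)
    ultimately have "S\<^sub>x *v (S\<^sub>x *v y) = S *v (S *v y') + (\<mu> * (x \<bullet> y)) *\<^sub>R x"
      using \<mu> by (simp add: Sxz matrix_vector_right_distrib Sx xx algebra_simps)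
    also have "S *v (S *v y') = A *v y - (\<mu> * (x \<bullet> y)) *\<^sub>R x"
      using sqS[OF y'V xy'] by (simp add: y'_def matrix_vector_mult_diff_distrib matrix_vector_mult_scaleR Ax)
    finally show ?thesis by simp
  qed
  moreover have "S\<^sub>x *v z = 0" if "\<forall>v\<in>V. v \<bullet> z = 0" for z
    using that xV kerS[of z] by (simp add: Sxz)
  ultimately show ?thesis by (simp add: psd_sqrt_on_def S\<^sub>x_def)
qed

lemma psd_sqrt_on_exists:
  fixes A :: "real^'n^'n"
  assumes A: "A \<in> psd_mats"
  shows "subspace V \<Longrightarrow> (\<And>y. y \<in> V \<Longrightarrow> A *v y \<in> V) \<Longrightarrow> \<exists>S. psd_sqrt_on V A S"
proof (induction "dim V" arbitrary: V rule: less_induct)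
  case less
  have symA: "transpose A = A" and posA: "\<And>y. 0 \<le> y \<bullet> (A *v y)"
    using A by (auto simp: psd_mats_def)
  show ?case
  proof (cases "\<exists>v\<in>V. v \<noteq> 0")
    case False
    have "(0::real^'n^'n) \<in> psd_mats" by (simp add: psd_mats_def transpose_def vec_eq_iff)
    with False show ?thesis by (intro exI[of _ 0]) (auto simp: psd_sqrt_on_def)
  next
    case True
    then obtain v where "v \<in> V" "v \<noteq> 0" by blast
    then obtain x where xV: "x \<in> V" and nx: "norm x = 1" and Ax: "A *v x = (x \<bullet> (A *v x)) *\<^sub>R x"
      using symmetric_matrix_top_eigenvector[OF symA less.prems] by metis
    define V' where "V' = {y\<in>V. x \<bullet> y = 0}"
    have V': "subspace V'"
      using less.prems(1) unfolding V'_def subspace_def by (auto simp: inner_add_right)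
    have V'inv: "A *v y \<in> V'" if "y \<in> V'" for y
    proof -
      have "x \<bullet> (A *v y) = (A *v x) \<bullet> y" by (rule symmetric_matrix_inner_commute[OF symA])
      also have "\<dots> = 0" using that by (subst Ax) (simp add: V'_def)
      finally show ?thesis using that less.prems(2) by (auto simp: V'_def)
    qed
    have "dim V' < dim V"
    proof (rule dim_psubset)
      have "x \<bullet> x = 1" using nx by (simp add: dot_square_norm)
      then have "x \<notin> V'" by (simp add: V'_def)
      moreover have "V' \<subseteq> V" by (auto simp: V'_def)
      ultimately have "V' \<subset> V" using xV by blast
      then show "span V' \<subset> span V" using less.prems(1) V' by (simp add: span_eq_iff[THEN iffD2])
    qed
    then obtain S where "psd_sqrt_on V' A S" using less.hyps V' V'inv by blast
    then show ?thesis
      using psd_sqrt_on_extend[OF less.prems(1) xV nx Ax posA] unfolding V'_def by blast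
  qed
qed

lemma psd_sqrt_exists:
  fixes A :: "real^'n^'n"
  assumes "A \<in> psd_mats"
  shows "\<exists>S\<in>psd_mats. S ** S = A"
proof -
  obtain S where "psd_sqrt_on UNIV A S"
    using psd_sqrt_on_exists[OF assms subspace_UNIV] by blast
  then show ?thesis
    by (auto simp: psd_sqrt_on_def matrix_eq matrix_vector_mul_assoc)
qed

text \<open>Test a top eigenvector \<open>x\<close> of \<open>D = S - T\<close> against \<open>S D + D T = S\<^sup>2 - T\<^sup>2 = 0\<close>:
  a positive eigenvalue would force \<open>x\<close> into the kernels of \<open>S\<close> and \<open>T\<close>.\<close>
lemma psd_square_eq_imp_diff_psd:
  fixes S T :: "real^'n^'n"
  assumes S: "S \<in> psd_mats" and T: "T \<in> psd_mats" and eq: "S ** S = T ** T"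
  shows "T - S \<in> psd_mats"
proof -
  define D where "D = S - T"
  have symS: "transpose S = S" and symT: "transpose T = T"
    and posS: "\<And>z. 0 \<le> z \<bullet> (S *v z)" and posT: "\<And>z. 0 \<le> z \<bullet> (T *v z)"
    using S T by (auto simp: psd_mats_def)
  have symD: "transpose D = D" by (simp add: D_def transpose_diff symS symT)
  obtain x where nx: "norm x = 1" and Dx: "D *v x = (x \<bullet> (D *v x)) *\<^sub>R x"
    and xmax: "\<And>y. y \<bullet> (D *v y) \<le> (x \<bullet> (D *v x)) * (y \<bullet> y)"
    using symmetric_matrix_top_eigenvector[OF symD subspace_UNIV, of "axis undefined 1"]
    by (metis UNIV_I axis_eq_0_iff one_neq_zero)
  define \<mu> where "\<mu> = x \<bullet> (D *v x)"
  have D\<mu>: "D *v x = \<mu> *\<^sub>R x" using Dx by (simp add: \<mu>_def)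
  have "\<mu> \<le> 0"
  proof (rule ccontr)
    assume "\<not> \<mu> \<le> 0"
    have "S *v (D *v x) + D *v (T *v x) = S *v (S *v x) - T *v (T *v x)"
      by (simp add: D_def matrix_vector_mult_diff_distrib matrix_vector_mult_diff_rdistrib)
    also have "\<dots> = 0" using eq by (simp add: matrix_vector_mul_assoc)
    finally have "x \<bullet> (S *v (D *v x)) + x \<bullet> (D *v (T *v x)) = 0"
      by (metis inner_add_right inner_zero_right)
    moreover have "x \<bullet> (D *v (T *v x)) = \<mu> * (x \<bullet> (T *v x))"
      using symmetric_matrix_inner_commute[OF symD, of x "T *v x"] by (simp add: D\<mu>)
    ultimately have "\<mu> * (x \<bullet> (S *v x) + x \<bullet> (T *v x)) = 0"
      by (simp add: D\<mu> matrix_vector_mult_scaleR distrib_left)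
    then have "x \<bullet> (S *v x) = 0" "x \<bullet> (T *v x) = 0"
      using \<open>\<not> \<mu> \<le> 0\<close> posS[of x] posT[of x] by auto
    then have "S *v x = 0" "T *v x = 0" using psd_mats_form_eq_0_imp S T by blast+
    then have "D *v x = 0" by (simp add: D_def matrix_vector_mult_diff_rdistrib)
    then show False using D\<mu> nx \<open>\<not> \<mu> \<le> 0\<close> by auto
  qed
  then have "\<mu> * (y \<bullet> y) \<le> 0" for y by (simp add: mult_nonpos_nonneg)
  then have "y \<bullet> (D *v y) \<le> 0" for y using xmax[of y] unfolding \<mu>_def by (meson order_trans)
  then have "0 \<le> y \<bullet> ((T - S) *v y)" for y
    by (simp add: D_def matrix_vector_mult_diff_rdistrib inner_diff_right)
  then show ?thesis by (simp add: psd_mats_def transpose_diff symS symT)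
qed

lemma psd_sqrt_unique:
  fixes S T :: "real^'n^'n"
  assumes S: "S \<in> psd_mats" and T: "T \<in> psd_mats" and eq: "S ** S = T ** T"
  shows "S = T"
proof -
  have "(T - S) *v y = 0" for y
  proof (rule psd_mats_form_eq_0_imp)
    show "T - S \<in> psd_mats" by (rule psd_square_eq_imp_diff_psd[OF S T eq])
    have "0 \<le> y \<bullet> ((S - T) *v y)"
      using psd_square_eq_imp_diff_psd[OF T S eq[symmetric]] by (simp add: psd_mats_def)
    moreover have "0 \<le> y \<bullet> ((T - S) *v y)"
      using psd_square_eq_imp_diff_psd[OF S T eq] by (simp add: psd_mats_def)
    ultimately show "y \<bullet> ((T - S) *v y) = 0"
      by (simp add: matrix_vector_mult_diff_rdistrib inner_diff_right)
  qed
  then show ?thesis by (simp add: matrix_eq matrix_vector_mult_diff_rdistrib)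
qed

lemma psd_sqrt:
  fixes Q :: "real^'n^'n"
  assumes "Q \<in> psd_mats"
  shows psd_sqrt_psd: "psd_sqrt Q \<in> psd_mats" and psd_sqrt_square: "psd_sqrt Q ** psd_sqrt Q = Q"
proof -
  have "\<exists>!S. S \<in> psd_mats \<and> S ** S = Q"
    using psd_sqrt_exists[OF assms] psd_sqrt_unique by blast
  then have "psd_sqrt Q \<in> psd_mats \<and> psd_sqrt Q ** psd_sqrt Q = Q"
    unfolding psd_sqrt_def by (rule theI')
  then show "psd_sqrt Q \<in> psd_mats" "psd_sqrt Q ** psd_sqrt Q = Q" by auto
qed

lemma psd_mats_square:
  assumes "S \<in> psd_mats"
  shows "S ** S \<in> psd_mats"
proof -
  have symS: "transpose S = S" using assms by (simp add: psd_mats_def)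
  have "x \<bullet> ((S ** S) *v x) = (S *v x) \<bullet> (S *v x)" for x
    by (simp add: matrix_vector_mul_assoc[symmetric] symmetric_matrix_inner_commute[OF symS])
  then show ?thesis by (simp add: psd_mats_def matrix_transpose_mul symS)
qed

lemma psd_sqrt_of_square:
  assumes "S \<in> psd_mats"
  shows "psd_sqrt (S ** S) = S"
  using psd_sqrt_unique[OF psd_sqrt_psd[OF psd_mats_square] assms psd_sqrt_square[OF psd_mats_square]]
    assms by blast

lemma closed_psd_mats: "closed (psd_mats :: (real^'n^'n) set)"
proof -
  have "continuous_on UNIV (transpose :: real^'n^'n \<Rightarrow> real^'n^'n)"
    unfolding transpose_def by (intro continuous_intros)
  then have "closed {A :: real^'n^'n. transpose A = A}"
    by (intro closed_Collect_eq continuous_on_id)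
  moreover have "closed {A :: real^'n^'n. 0 \<le> x \<bullet> (A *v x)}" for x
    unfolding matrix_vector_mult_def by (intro closed_Collect_le continuous_intros)
  ultimately have "closed ({A :: real^'n^'n. transpose A = A} \<inter> (\<Inter>x. {A. 0 \<le> x \<bullet> (A *v x)}))"
    by (intro closed_Int closed_INT) auto
  moreover have "psd_mats = {A :: real^'n^'n. transpose A = A} \<inter> (\<Inter>x. {A. 0 \<le> x \<bullet> (A *v x)})"
    by (auto simp: psd_mats_def)
  ultimately show ?thesis by simp
qed

lemma norm_squared_symmetric_matrix:
  fixes S :: "real^'n^'n"
  assumes "transpose S = S"
  shows "(norm S)\<^sup>2 = trace (S ** S)"
proof -
  have s: "S $ k $ i = S $ i $ k" for i k
    using assms by (metis transpose_def vec_lambda_beta)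
  have "(norm S)\<^sup>2 = (\<Sum>i\<in>UNIV. \<Sum>k\<in>UNIV. S $ i $ k * S $ i $ k)"
    by (simp add: power2_norm_eq_inner inner_vec_def)
  also have "\<dots> = trace (S ** S)"
    by (simp add: trace_def matrix_matrix_mult_def s)
  finally show ?thesis .
qed

lemma norm_psd_sqrt_squared:
  fixes Q :: "real^'n^'n"
  assumes "Q \<in> psd_mats"
  shows "(norm (psd_sqrt Q))\<^sup>2 = trace Q"
  using norm_squared_symmetric_matrix[of "psd_sqrt Q"] psd_sqrt_psd[OF assms] psd_sqrt_square[OF assms]
  by (simp add: psd_mats_def)

lemma trace_le_norm:
  fixes Q :: "real^'n^'n"
  shows "trace Q \<le> CARD('n) * norm Q"
proof -
  have "trace Q \<le> (\<Sum>i\<in>(UNIV::'n set). norm Q)"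
    unfolding trace_def
  proof (rule sum_mono)
    fix i :: 'n
    have "Q $ i $ i \<le> norm (Q $ i)" using component_le_norm_cart[of "Q $ i" i] by linarith
    also have "\<dots> \<le> norm Q" by (rule Finite_Cartesian_Product.norm_nth_le)
    finally show "Q $ i $ i \<le> norm Q" .
  qed
  then show ?thesis by simp
qed

lemma tendsto_psd_sqrt:
  fixes Q :: "nat \<Rightarrow> real^'n^'n"
  assumes Q: "\<And>n. Q n \<in> psd_mats" and lim: "Q \<longlonglongrightarrow> L" and L: "L \<in> psd_mats"
  shows "(\<lambda>n. psd_sqrt (Q n)) \<longlonglongrightarrow> psd_sqrt L"
proof -
  obtain B where B: "\<And>n. norm (Q n) \<le> B" "norm L \<le> B"
  proof -
    obtain B0 where "\<And>n. norm (Q n) \<le> B0"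
      using convergent_imp_Bseq[OF convergentI[OF lim]] by (auto elim!: BseqE)
    then show ?thesis by (intro that[of "max B0 (norm L)"]) (auto intro: max.coboundedI1)
  qed
  define K where "K = psd_mats \<inter> cball (0 :: real^'n^'n) (sqrt (CARD('n) * B))"
  have in_sq_K: "P \<in> (\<lambda>S. S ** S) ` K" if "P \<in> psd_mats" "norm P \<le> B" for P
  proof (rule image_eqI)
    show "P = psd_sqrt P ** psd_sqrt P" using psd_sqrt_square[OF that(1)] by simp
    have "(norm (psd_sqrt P))\<^sup>2 \<le> CARD('n) * B"
    proof -
      have "real CARD('n) * norm P \<le> CARD('n) * B" using that(2) by (simp add: mult_left_mono)
      then show ?thesis using norm_psd_sqrt_squared[OF that(1)] trace_le_norm[of P] by linarith
    qed
    then show "psd_sqrt P \<in> K" using psd_sqrt_psd[OF that(1)] by (simp add: K_def real_le_rsqrt)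
  qed
  have "continuous_on K (\<lambda>S. S ** S)"
    unfolding matrix_matrix_mult_def by (intro continuous_intros)
  moreover have "compact K" unfolding K_def by (intro closed_Int_compact closed_psd_mats compact_cball)
  ultimately have "continuous_on ((\<lambda>S. S ** S) ` K) psd_sqrt"
    by (rule continuous_on_inv) (simp add: K_def psd_sqrt_of_square)
  then show ?thesis
    by (rule continuous_on_tendsto_compose[OF _ lim]) (use Q L B in_sq_K in auto)
qed

section \<open>Gaussian integrals\<close>

lemma nn_integral_exp_neg_sq_finite:
  fixes a :: real
  assumes a: "a > 0"
  shows "(\<integral>\<^sup>+ x. ennreal (exp (- a * x\<^sup>2)) \<partial>lborel) < \<infinity>"
proof -
  define \<sigma> where "\<sigma> = 1 / sqrt (2 * a)"
  have \<sigma>: "\<sigma> > 0" "\<sigma>\<^sup>2 = 1 / (2 * a)" using a by (simp_all add: \<sigma>_def power_divide)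
  have "exp (- a * x\<^sup>2) = sqrt (2 * pi * \<sigma>\<^sup>2) * normal_density 0 \<sigma> x" for x
    using a \<sigma> by (simp add: normal_density_def field_simps)
  then have "(\<integral>\<^sup>+ x. ennreal (exp (- a * x\<^sup>2)) \<partial>lborel)
      = ennreal (sqrt (2 * pi * \<sigma>\<^sup>2)) * (\<integral>\<^sup>+ x. ennreal (normal_density 0 \<sigma> x) \<partial>lborel)"
    by (simp add: ennreal_mult nn_integral_cmult[symmetric])
  also have "(\<integral>\<^sup>+ x. ennreal (normal_density 0 \<sigma> x) \<partial>lborel) = 1"
    using prob_space.emeasure_space_1[OF prob_space_normal_density[OF \<sigma>(1)]]
    by (simp add: emeasure_density)
  finally show ?thesis by (simp add: ennreal_less_top)
qed

lemma nn_integral_exp_neg_norm_sq_finite: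
  fixes a :: real
  assumes a: "a > 0"
  shows "(\<integral>\<^sup>+ z. ennreal (exp (- a * (norm z)\<^sup>2)) \<partial>(lborel :: 'a::euclidean_space measure)) < \<infinity>"
proof -
  interpret product_sigma_finite "\<lambda>b::'a. lborel"
    by (intro product_sigma_finite.intro sigma_finite_lborel)
  have norm_coords: "(norm (\<Sum>b\<in>Basis. f b *\<^sub>R b))\<^sup>2 = (\<Sum>b\<in>(Basis::'a set). (f b)\<^sup>2)" for f
    unfolding power2_norm_eq_inner
    by (subst euclidean_inner) (simp add: inner_sum_left_Basis power2_eq_square)
  have "(\<integral>\<^sup>+ z. ennreal (exp (- a * (norm z)\<^sup>2)) \<partial>(lborel :: 'a measure))
      = (\<integral>\<^sup>+ f. ennreal (exp (- a * (norm (\<Sum>b\<in>Basis. f b *\<^sub>R b))\<^sup>2)) \<partial>(\<Pi>\<^sub>M b\<in>(Basis::'a set). lborel))"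
    by (subst lborel_eq) (rule nn_integral_distr; measurable)
  also have "\<dots> = (\<integral>\<^sup>+ f. (\<Prod>b\<in>(Basis::'a set). ennreal (exp (- a * (f b)\<^sup>2))) \<partial>(\<Pi>\<^sub>M b\<in>(Basis::'a set). lborel))"
    by (simp add: norm_coords sum_distrib_left exp_sum prod_ennreal)
  also have "\<dots> = (\<Prod>b\<in>(Basis::'a set). (\<integral>\<^sup>+ x. ennreal (exp (- a * x\<^sup>2)) \<partial>lborel))"
    by (rule product_nn_integral_prod) auto
  also have "\<dots> < \<infinity>"
    using nn_integral_exp_neg_sq_finite[OF a] by (simp add: less_top[symmetric] power_eq_top_ennreal_iff)
  finally show ?thesis .
qed

lemma sets_std_gauss [measurable_cong]: "sets std_gauss = sets borel"
  by (simp add: std_gauss_def)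

lemma space_std_gauss [simp]: "space std_gauss = UNIV"
  by (simp add: std_gauss_def)

lemma measurable_std_gauss_iff [simp]: "f \<in> borel_measurable std_gauss \<longleftrightarrow> f \<in> borel_measurable borel"
  by (simp add: std_gauss_def)

lemma nn_integral_std_gauss:
  fixes f :: "real^'d \<Rightarrow> ennreal"
  assumes "f \<in> borel_measurable borel"
  shows "(\<integral>\<^sup>+ z. f z \<partial>std_gauss) = (\<integral>\<^sup>+ z. ennreal ((2 * pi) powr (- real CARD('d) / 2)
      * exp (- (norm z * norm z) / 2)) * f z \<partial>lborel)"
  unfolding std_gauss_def using assms by (subst nn_integral_density) auto

lemma nn_integral_std_gauss_exp_norm_sq_finite:
  fixes c :: real
  assumes c: "c < 1/2"
  shows "(\<integral>\<^sup>+ z. ennreal (exp (c * (norm z)\<^sup>2)) \<partial>(std_gauss :: (real^'d) measure)) < \<infinity>"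
proof -
  define k :: real where "k = (2 * pi) powr (- real CARD('d) / 2)"
  have "ennreal (k * exp (- (norm z * norm z) / 2)) * ennreal (exp (c * (norm z)\<^sup>2))
      = ennreal k * ennreal (exp (- (1/2 - c) * (norm z)\<^sup>2))" for z :: "real^'d"
  proof -
    have "exp (- (norm z * norm z) / 2) * exp (c * (norm z)\<^sup>2) = exp (- (1/2 - c) * (norm z)\<^sup>2)"
      by (simp add: exp_add[symmetric] power2_eq_square algebra_simps)
    then show ?thesis by (simp add: k_def ennreal_mult'[symmetric] mult.assoc)
  qed
  then have "(\<integral>\<^sup>+ z. ennreal (exp (c * (norm z)\<^sup>2)) \<partial>(std_gauss :: (real^'d) measure))
      = (\<integral>\<^sup>+ z. ennreal k * ennreal (exp (- (1/2 - c) * (norm (z::real^'d))\<^sup>2)) \<partial>lborel)"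
    by (subst nn_integral_std_gauss) (simp_all add: k_def)
  also have "\<dots> = ennreal k * (\<integral>\<^sup>+ z. ennreal (exp (- (1/2 - c) * (norm z)\<^sup>2)) \<partial>(lborel :: (real^'d) measure))"
    by (rule nn_integral_cmult) measurable
  also have "\<dots> < \<infinity>"
    using nn_integral_exp_neg_norm_sq_finite[where a="1/2 - c" and 'a="real^'d"] c
    by (simp add: ennreal_mult_less_top)
  finally show ?thesis .
qed

lemma emeasure_std_gauss_finite: "emeasure (std_gauss :: (real^'d) measure) UNIV < \<infinity>"
  using nn_integral_std_gauss_exp_norm_sq_finite[of 0, where 'd='d] by (simp add: nn_integral_const)

lemma nn_integral_std_gauss_pos:
  fixes f :: "real^'d \<Rightarrow> real"
  assumes f: "f \<in> borel_measurable borel" and pos: "\<And>z. f z > 0"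
  shows "(\<integral>\<^sup>+ z. ennreal (f z) \<partial>std_gauss) > 0"
proof -
  let ?g = "\<lambda>z::real^'d. ennreal ((2 * pi) powr (- real CARD('d) / 2)
      * exp (- (norm z * norm z) / 2)) * ennreal (f z)"
  have "(\<integral>\<^sup>+ z. ?g z \<partial>lborel) \<noteq> 0"
  proof
    assume "(\<integral>\<^sup>+ z. ?g z \<partial>lborel) = 0"
    then have "AE z in lborel. ?g z = 0"
      by (subst (asm) nn_integral_0_iff_AE) (use f in measurable)
    moreover have "?g z \<noteq> 0" for z
      using pos[of z] by (simp add: ennreal_eq_0_iff not_le)
    ultimately have "AE z in (lborel :: (real^'d) measure). False"
      by (simp add: eventually_mono)
    then show False by (simp add: eventually_False ae_filter_eq_bot_iff)
  qed
  then show ?thesis using f by (simp add: nn_integral_std_gauss zero_less_iff_neq_zero)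
qed

lemma nn_integral_exp_convex_combination_le:
  fixes u v :: "'a \<Rightarrow> real"
  assumes [measurable]: "u \<in> borel_measurable M" "v \<in> borel_measurable M" and t: "0 \<le> t" "t \<le> 1"
  shows "(\<integral>\<^sup>+ z. ennreal (exp (t * u z + (1 - t) * v z)) \<partial>M)
      \<le> ennreal t * (\<integral>\<^sup>+ z. ennreal (exp (u z)) \<partial>M)
        + ennreal (1 - t) * (\<integral>\<^sup>+ z. ennreal (exp (v z)) \<partial>M)"
proof -
  have "(\<integral>\<^sup>+ z. ennreal (exp (t * u z + (1 - t) * v z)) \<partial>M)
      \<le> (\<integral>\<^sup>+ z. ennreal t * ennreal (exp (u z)) + ennreal (1 - t) * ennreal (exp (v z)) \<partial>M)"
  proof (rule nn_integral_mono)
    fix z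
    have "exp (t * u z + (1 - t) * v z) \<le> t * exp (u z) + (1 - t) * exp (v z)"
      using convex_onD[OF exp_convex, of t "v z" "u z"] t by (simp add: algebra_simps)
    then show "ennreal (exp (t * u z + (1 - t) * v z))
        \<le> ennreal t * ennreal (exp (u z)) + ennreal (1 - t) * ennreal (exp (v z))"
      using t by (simp add: ennreal_mult'[symmetric] ennreal_plus[symmetric] del: ennreal_plus)
  qed
  also have "\<dots> = ennreal t * (\<integral>\<^sup>+ z. ennreal (exp (u z)) \<partial>M)
      + ennreal (1 - t) * (\<integral>\<^sup>+ z. ennreal (exp (v z)) \<partial>M)"
    by (simp add: nn_integral_add nn_integral_cmult)
  finally show ?thesis .
qed

section \<open>Continuity of the moment generating function\<close>

lemma trace_transpose_mult: "trace (transpose A ** B) = A \<bullet> (B :: real^'n^'n)"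
proof -
  have "trace (transpose A ** B) = (\<Sum>i\<in>UNIV. \<Sum>k\<in>UNIV. A $ k $ i * B $ k $ i)"
    by (simp add: trace_def matrix_matrix_mult_def transpose_def)
  also have "\<dots> = A \<bullet> B" by (subst sum.swap) (simp add: inner_vec_def)
  finally show ?thesis .
qed

lemma frob_norm_eq_norm: "frob_norm (A :: real^'n^'m) = norm A"
  by (simp add: frob_norm_def norm_eq_sqrt_inner inner_vec_def power2_eq_square)

lemma norm_matrix_vector_mult_le:
  fixes A :: "real^'n^'m"
  shows "norm (A *v x) \<le> norm A * norm x"
proof -
  have row: "(A *v x) $ i = A $ i \<bullet> x" for i
    by (simp add: matrix_vector_mult_def inner_vec_def)
  have "(norm (A *v x))\<^sup>2 = (\<Sum>i\<in>UNIV. (A $ i \<bullet> x)\<^sup>2)"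
    unfolding power2_norm_eq_inner[of "A *v x"] inner_vec_def[of "A *v x"] row
    by (simp add: power2_eq_square)
  also have "\<dots> \<le> (\<Sum>i\<in>UNIV. (norm (A $ i))\<^sup>2 * (norm x)\<^sup>2)"
  proof (rule sum_mono)
    fix i
    have "\<bar>A $ i \<bullet> x\<bar>\<^sup>2 \<le> (norm (A $ i) * norm x)\<^sup>2"
      by (rule power_mono[OF Cauchy_Schwarz_ineq2]) simp
    then show "(A $ i \<bullet> x)\<^sup>2 \<le> (norm (A $ i))\<^sup>2 * (norm x)\<^sup>2" by (simp add: power_mult_distrib)
  qed
  also have "\<dots> = (norm A * norm x)\<^sup>2"
    by (simp add: power_mult_distrib sum_distrib_right[symmetric] power2_norm_eq_inner inner_vec_def)
  finally show ?thesis by (rule power2_le_imp_le) simp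
qed

lemma mgf_M_eq: "mgf_M G Q0 Q = (\<integral>\<^sup>+ z. ennreal (exp (Q0 \<bullet> G (psd_sqrt Q *v z))) \<partial>std_gauss)"
  by (simp add: mgf_M_def trace_transpose_mult)

lemma borel_measurable_inner_comp_mult:
  fixes G :: "real^'d \<Rightarrow> real^'e^'e" and A :: "real^'d^'d"
  assumes "continuous_on UNIV G"
  shows "(\<lambda>z. Q0 \<bullet> G (A *v z)) \<in> borel_measurable borel"
  by (intro borel_measurable_continuous_onI continuous_intros
      continuous_on_compose2[OF assms matrix_vector_mult_linear_continuous_on]) auto

lemma mgf_M_pos:
  fixes G :: "real^'d \<Rightarrow> real^'e^'e"
  assumes "continuous_on UNIV G"
  shows "mgf_M G Q0 Q > 0"
  unfolding mgf_M_eq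
  using borel_measurable_inner_comp_mult[OF assms, of Q0 "psd_sqrt Q"]
  by (intro nn_integral_std_gauss_pos) auto

lemma mgf_M_scaleR_le:
  fixes G :: "real^'d \<Rightarrow> real^'e^'e"
  assumes G: "continuous_on UNIV G" and t: "0 \<le> t" "t \<le> 1"
  shows "mgf_M G (t *\<^sub>R Q0) Q
    \<le> ennreal t * mgf_M G Q0 Q + ennreal (1 - t) * emeasure (std_gauss :: (real^'d) measure) UNIV"
  using nn_integral_exp_convex_combination_le[OF _ _ t, of "\<lambda>z. Q0 \<bullet> G (psd_sqrt Q *v z)" std_gauss "\<lambda>_. 0"]
    borel_measurable_inner_comp_mult[OF G, of Q0 "psd_sqrt Q"]
  by (simp add: mgf_M_eq)

lemma asym_quad_lipschitz_local_bound:
  fixes G :: "real^'d \<Rightarrow> real^'e^'e"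
  assumes lip: "asym_quad_lipschitz G" and K: "K > 0" and c: "c > 0"
  obtains C \<eta> where "\<eta> > 0"
    "\<And>(A :: real^'d^'d) B z. norm A \<le> K \<Longrightarrow> norm B \<le> K \<Longrightarrow> norm (A - B) \<le> \<eta> \<Longrightarrow>
       norm (G (A *v z) - G (B *v z)) \<le> C + c * (norm z)\<^sup>2"
proof -
  have "c / (4 * K\<^sup>2) > 0" using K c by simp
  then obtain C where C: "C > 0" and CL: "\<And>x y. norm (G x - G y)
      \<le> C * (1 + norm (x - y) * (norm x + norm y)) + c / (4 * K\<^sup>2) * ((norm x)\<^sup>2 + (norm y)\<^sup>2)"
    using lip unfolding asym_quad_lipschitz_def frob_norm_eq_norm by blast
  define \<eta> where "\<eta> = c / (4 * C * K)"
  have \<eta>: "\<eta> > 0" using C K c by (simp add: \<eta>_def)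
  have "norm (G (A *v z) - G (B *v z)) \<le> C + c * (norm z)\<^sup>2"
    if A: "norm A \<le> K" and B: "norm B \<le> K" and AB: "norm (A - B) \<le> \<eta>"
    for A B :: "real^'d^'d" and z :: "real^'d"
  proof -
    have "norm (A *v z - B *v z) \<le> \<eta> * norm z"
      using norm_matrix_vector_mult_le[of "A - B" z] AB
      by (simp add: matrix_vector_mult_diff_rdistrib) (meson mult_right_mono norm_ge_zero order_trans)
    moreover have nA: "norm (A *v z) \<le> K * norm z" and nB: "norm (B *v z) \<le> K * norm z"
      using norm_matrix_vector_mult_le[of A z] norm_matrix_vector_mult_le[of B z] A B
      by (meson mult_right_mono norm_ge_zero order_trans)+
    ultimately have "norm (A *v z - B *v z) * (norm (A *v z) + norm (B *v z))
        \<le> (\<eta> * norm z) * (2 * K * norm z)"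
      using \<eta> by (intro mult_mono) auto
    moreover have "(norm (A *v z))\<^sup>2 + (norm (B *v z))\<^sup>2 \<le> 2 * (K * norm z)\<^sup>2"
      using power_mono[OF nA, of 2] power_mono[OF nB, of 2] by simp
    ultimately have "norm (G (A *v z) - G (B *v z))
        \<le> C * (1 + (\<eta> * norm z) * (2 * K * norm z)) + c / (4 * K\<^sup>2) * (2 * (K * norm z)\<^sup>2)"
      using CL[of "A *v z" "B *v z"] C c K
      by (smt (verit) mult_left_mono divide_nonneg_pos zero_less_power)
    also have "\<dots> = C + c * (norm z)\<^sup>2"
      using C K by (simp add: \<eta>_def field_simps power2_eq_square)
    finally show ?thesis .
  qed
  with \<eta> show thesis by (rule that)
qed

lemma nn_integral_std_gauss_exp_interpolate_finite:
  fixes u :: "real^'d \<Rightarrow> real"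
  assumes u: "u \<in> borel_measurable borel" and fin: "(\<integral>\<^sup>+ z. ennreal (exp (u z)) \<partial>std_gauss) < \<infinity>"
    and t: "0 \<le> t" "t \<le> 1"
  shows "(\<integral>\<^sup>+ z. ennreal (exp (t * u z + (1 - t) * ((1/4) * (norm z)\<^sup>2))) \<partial>std_gauss) < \<infinity>"
proof -
  have "(\<integral>\<^sup>+ z. ennreal (exp ((1/4) * (norm z)\<^sup>2)) \<partial>(std_gauss :: (real^'d) measure)) < \<infinity>"
    by (rule nn_integral_std_gauss_exp_norm_sq_finite) simp
  with fin show ?thesis
    using nn_integral_exp_convex_combination_le[OF _ _ t, of u std_gauss "\<lambda>z. (1/4) * (norm z)\<^sup>2"] u
    by (auto simp: ennreal_mult_less_top order.strict_trans1)
qed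

lemma asym_quad_lipschitz_eventually_dominated:
  fixes G :: "real^'d \<Rightarrow> real^'e^'e" and A :: "nat \<Rightarrow> real^'d^'d"
  assumes lip: "asym_quad_lipschitz G" and lim: "A \<longlonglongrightarrow> A\<^sub>0" and t: "0 < t" "t < 1"
  obtains C N where "\<And>n z. n \<ge> N \<Longrightarrow>
    t * (Q0 \<bullet> G (A n *v z)) \<le> C + (t * (Q0 \<bullet> G (A\<^sub>0 *v z)) + (1 - t) * ((1/4) * (norm z)\<^sup>2))"
proof -
  define q where "q = norm Q0"
  have q: "q \<ge> 0" by (simp add: q_def)
  obtain K0 where K0: "K0 > 0" "\<And>n. norm (A n) \<le> K0"
    using convergent_imp_Bseq[OF convergentI[OF lim]] by (auto elim!: BseqE)
  define K where "K = K0 + norm A\<^sub>0"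
  have K: "K > 0" "norm A\<^sub>0 \<le> K" "\<And>n. norm (A n) \<le> K"
    using K0 norm_ge_zero[of A\<^sub>0] by (simp_all add: K_def add_increasing2 add_pos_nonneg)
  have "(1 - t) / (4 * t * (q + 1)) > 0"
    using t q by (intro divide_pos_pos mult_pos_pos) simp_all
  then obtain C \<eta> where \<eta>: "\<eta> > 0" and CG: "\<And>(B :: real^'d^'d) z. norm B \<le> K \<Longrightarrow>
      norm (B - A\<^sub>0) \<le> \<eta> \<Longrightarrow> norm (G (B *v z) - G (A\<^sub>0 *v z)) \<le> C + (1 - t) / (4 * t * (q + 1)) * (norm z)\<^sup>2"
    using asym_quad_lipschitz_local_bound[OF lip K(1)] K(2) by metis
  obtain N where N: "\<And>n. n \<ge> N \<Longrightarrow> norm (A n - A\<^sub>0) \<le> \<eta>"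
    using lim \<eta> unfolding LIMSEQ_def dist_norm by (meson less_imp_le)
  have "t * (Q0 \<bullet> G (A n *v z)) \<le> t * q * C + (t * (Q0 \<bullet> G (A\<^sub>0 *v z)) + (1 - t) * ((1/4) * (norm z)\<^sup>2))"
    if "n \<ge> N" for n z
  proof -
    have "Q0 \<bullet> G (A n *v z) - Q0 \<bullet> G (A\<^sub>0 *v z) = Q0 \<bullet> (G (A n *v z) - G (A\<^sub>0 *v z))"
      by (simp add: inner_diff_right)
    also have "\<dots> \<le> q * norm (G (A n *v z) - G (A\<^sub>0 *v z))"
      unfolding q_def by (rule norm_cauchy_schwarz)
    also have "\<dots> \<le> q * (C + (1 - t) / (4 * t * (q + 1)) * (norm z)\<^sup>2)"
      using CG[OF K(3) N[OF that]] by (simp add: q_def mult_left_mono)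
    also have "\<dots> \<le> q * C + (1 - t) / (4 * t) * (norm z)\<^sup>2"
    proof -
      have "q * ((1 - t) / (4 * t * (q + 1))) = q / (q + 1) * ((1 - t) / (4 * t))"
        using q by (simp add: field_simps)
      also have "\<dots> \<le> 1 * ((1 - t) / (4 * t))"
        using q t by (intro mult_right_mono) simp_all
      finally have "q * ((1 - t) / (4 * t * (q + 1))) * (norm z)\<^sup>2 \<le> (1 - t) / (4 * t) * (norm z)\<^sup>2"
        by (intro mult_right_mono) simp_all
      then show ?thesis by (simp only: distrib_left mult.assoc[symmetric])
    qed
    finally show ?thesis using t by (simp add: field_simps)
  qed
  then show thesis by (rule that)
qed

lemma nn_integral_exp_tendsto:
  fixes G :: "real^'d \<Rightarrow> real^'e^'e" and A :: "nat \<Rightarrow> real^'d^'d"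
  assumes lip: "asym_quad_lipschitz G" and lim: "A \<longlonglongrightarrow> A\<^sub>0"
    and fin: "(\<integral>\<^sup>+ z. ennreal (exp (Q0 \<bullet> G (A\<^sub>0 *v z))) \<partial>std_gauss) < \<infinity>"
    and t: "0 < t" "t < 1"
  shows "(\<lambda>n. \<integral>\<^sup>+ z. ennreal (exp (t * (Q0 \<bullet> G (A n *v z)))) \<partial>std_gauss)
      \<longlonglongrightarrow> (\<integral>\<^sup>+ z. ennreal (exp (t * (Q0 \<bullet> G (A\<^sub>0 *v z)))) \<partial>std_gauss)"
proof -
  have cG: "continuous_on UNIV G" using lip by (simp add: asym_quad_lipschitz_def)
  define u where "u z = Q0 \<bullet> G (A\<^sub>0 *v z)" for z
  have u[measurable]: "u \<in> borel_measurable borel"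
    unfolding u_def by (rule borel_measurable_inner_comp_mult[OF cG])
  obtain C N where dom: "\<And>n z. n \<ge> N \<Longrightarrow>
      t * (Q0 \<bullet> G (A n *v z)) \<le> C + (t * u z + (1 - t) * ((1/4) * (norm z)\<^sup>2))"
    using asym_quad_lipschitz_eventually_dominated[OF lip lim t] unfolding u_def by metis
  define w where "w z = ennreal (exp C) * ennreal (exp (t * u z + (1 - t) * ((1/4) * (norm z)\<^sup>2)))"
    for z
  have "(\<integral>\<^sup>+ z. w z \<partial>std_gauss)
      = ennreal (exp C) * (\<integral>\<^sup>+ z. ennreal (exp (t * u z + (1 - t) * ((1/4) * (norm z)\<^sup>2))) \<partial>std_gauss)"
    unfolding w_def by (rule nn_integral_cmult) measurable
  also have "\<dots> < \<infinity>"
    using nn_integral_std_gauss_exp_interpolate_finite[OF u _ less_imp_le[OF t(1)] less_imp_le[OF t(2)]] fin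
    by (simp add: u_def ennreal_mult_less_top)
  finally have w_finite: "(\<integral>\<^sup>+ z. w z \<partial>std_gauss) < \<infinity>" .
  have meas: "(\<lambda>z. ennreal (exp (t * (Q0 \<bullet> G (B *v z))))) \<in> borel_measurable std_gauss"
    for B :: "real^'d^'d"
    using borel_measurable_inner_comp_mult[OF cG, of Q0 B] by simp
  have "(\<lambda>n. \<integral>\<^sup>+ z. ennreal (exp (t * (Q0 \<bullet> G (A (n + N) *v z)))) \<partial>std_gauss)
      \<longlonglongrightarrow> (\<integral>\<^sup>+ z. ennreal (exp (t * (Q0 \<bullet> G (A\<^sub>0 *v z)))) \<partial>std_gauss)"
  proof (rule nn_integral_dominated_convergence[OF meas meas _ _ w_finite])
    show "w \<in> borel_measurable std_gauss" unfolding w_def by simp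
    show "AE z in std_gauss. ennreal (exp (t * (Q0 \<bullet> G (A (n + N) *v z)))) \<le> w z" for n
      using dom[of "n + N"] by (simp add: w_def ennreal_mult'[symmetric] exp_add[symmetric])
    show "AE z in std_gauss. (\<lambda>n. ennreal (exp (t * (Q0 \<bullet> G (A (n + N) *v z)))))
        \<longlonglongrightarrow> ennreal (exp (t * (Q0 \<bullet> G (A\<^sub>0 *v z))))"
    proof (intro AE_I2 tendsto_ennrealI tendsto_exp tendsto_mult tendsto_const tendsto_inner)
      fix z
      have "(\<lambda>n. A (n + N) *v z) \<longlonglongrightarrow> A\<^sub>0 *v z"
        unfolding matrix_vector_mult_def
        by (intro tendsto_vec_lambda tendsto_sum tendsto_mult tendsto_vec_nth tendsto_const
            LIMSEQ_ignore_initial_segment[OF lim])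
      then show "(\<lambda>n. G (A (n + N) *v z)) \<longlonglongrightarrow> G (A\<^sub>0 *v z)"
        by (rule continuous_on_tendsto_compose[OF cG]) auto
    qed
  qed
  then show ?thesis by (rule LIMSEQ_offset)
qed

section \<open>Lower semicontinuity of the rate function\<close>

lemma mgf_M_scaleR_tendsto:
  fixes G :: "real^'d \<Rightarrow> real^'e^'e" and Q1n :: "nat \<Rightarrow> real^'d^'d"
  assumes lip: "asym_quad_lipschitz G" and Q1n: "\<And>n. Q1n n \<in> psd_mats" "Q1n \<longlonglongrightarrow> Q1"
    and Q1: "Q1 \<in> psd_mats" and fin: "mgf_M G Q0 Q1 < \<infinity>" and t: "0 < t" "t < 1"
  shows "(\<lambda>n. mgf_M G (t *\<^sub>R Q0) (Q1n n)) \<longlonglongrightarrow> mgf_M G (t *\<^sub>R Q0) Q1"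
  using nn_integral_exp_tendsto[OF lip tendsto_psd_sqrt[OF Q1n Q1] _ t] fin
  by (simp add: mgf_M_eq)

lemma ereal_log_ennreal: "0 < x \<Longrightarrow> ereal_log (ennreal x) = ereal (ln x)"
  by (simp add: ereal_log_def)

lemma ereal_log_mono:
  assumes "x \<le> y"
  shows "ereal_log x \<le> ereal_log y"
proof (cases "x = 0 \<or> y = \<infinity>")
  case False
  then have "0 < enn2real x" "enn2real x \<le> enn2real y" "x \<noteq> \<infinity>" "y \<noteq> 0"
    using assms by (auto simp: enn2real_positive_iff less_top zero_less_iff_neq_zero enn2real_mono)
  then show ?thesis using False by (simp add: ereal_log_def)
qed (auto simp: ereal_log_def)

lemma tendsto_ereal_log:
  assumes lim: "(f \<longlongrightarrow> x) F" and x: "0 < x" "x < \<infinity>"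
  shows "((\<lambda>n. ereal_log (f n)) \<longlongrightarrow> ereal_log x) F"
proof -
  have log_eq: "ereal_log y = ereal (ln (enn2real y))" if "0 < y" "y < \<infinity>" for y
    using that by (auto simp: ereal_log_def)
  have "((\<lambda>n. enn2real (f n)) \<longlongrightarrow> enn2real x) F"
    using lim x(2) by (intro tendsto_enn2real) auto
  moreover have "enn2real x > 0" using x by (simp add: enn2real_positive_iff)
  ultimately have "((\<lambda>n. ereal (ln (enn2real (f n)))) \<longlongrightarrow> ereal (ln (enn2real x))) F"
    by (intro tendsto_ereal tendsto_ln) auto
  moreover have "eventually (\<lambda>n. ereal (ln (enn2real (f n))) = ereal_log (f n)) F"
    using order_tendstoD(1)[OF lim x(1)] order_tendstoD(2)[OF lim x(2)]
    by eventually_elim (simp add: log_eq)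
  ultimately show ?thesis unfolding log_eq[OF x] by (rule Lim_transform_eventually)
qed

lemma rate_I_ge:
  "Q0 \<in> sym_mats \<Longrightarrow> ereal (Q0 \<bullet> Q2) - ereal_log (mgf_M G Q0 Q1) \<le> rate_I G Q2 Q1"
  unfolding rate_I_def trace_transpose_mult by (rule SUP_upper)

lemma liminf_rate_I_ge_scaled:
  fixes G :: "real^'d \<Rightarrow> real^'e^'e"
  assumes lip: "asym_quad_lipschitz G" and Q1n: "\<And>n. Q1n n \<in> psd_mats" "Q1n \<longlonglongrightarrow> Q1"
    and Q1: "Q1 \<in> psd_mats" and Q2n: "Q2n \<longlonglongrightarrow> Q2" and Q0: "Q0 \<in> sym_mats"
    and fin: "mgf_M G Q0 Q1 < \<infinity>" and t: "0 < t" "t < 1"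
  shows "ereal (t * (Q0 \<bullet> Q2)) - ereal_log (mgf_M G (t *\<^sub>R Q0) Q1)
    \<le> liminf (\<lambda>n. rate_I G (Q2n n) (Q1n n))"
proof -
  have cG: "continuous_on UNIV G" using lip by (simp add: asym_quad_lipschitz_def)
  define T where "T n = ereal (t * (Q0 \<bullet> Q2n n)) - ereal_log (mgf_M G (t *\<^sub>R Q0) (Q1n n))" for n
  have "mgf_M G (t *\<^sub>R Q0) Q1
      \<le> ennreal t * mgf_M G Q0 Q1 + ennreal (1 - t) * emeasure (std_gauss :: (real^'d) measure) UNIV"
    using mgf_M_scaleR_le[OF cG, of t Q0 Q1] t by simp
  also have "\<dots> < \<infinity>"
    using fin emeasure_std_gauss_finite[where 'd='d] by (simp add: ennreal_mult_less_top)
  finally have fin_t: "mgf_M G (t *\<^sub>R Q0) Q1 < \<infinity>" .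
  then have "(\<lambda>n. ereal_log (mgf_M G (t *\<^sub>R Q0) (Q1n n))) \<longlonglongrightarrow> ereal_log (mgf_M G (t *\<^sub>R Q0) Q1)"
    by (intro tendsto_ereal_log mgf_M_scaleR_tendsto[OF lip Q1n Q1 fin t] mgf_M_pos[OF cG])
  moreover have "\<bar>ereal_log (mgf_M G (t *\<^sub>R Q0) Q1)\<bar> \<noteq> \<infinity>"
    using fin_t mgf_M_pos[OF cG, of "t *\<^sub>R Q0" Q1] by (auto simp: ereal_log_def)
  ultimately have "T \<longlonglongrightarrow> ereal (t * (Q0 \<bullet> Q2)) - ereal_log (mgf_M G (t *\<^sub>R Q0) Q1)"
    unfolding T_def by (intro tendsto_diff_ereal tendsto_intros Q2n) simp_all
  then have "ereal (t * (Q0 \<bullet> Q2)) - ereal_log (mgf_M G (t *\<^sub>R Q0) Q1) = liminf T"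
    by (simp add: lim_imp_Liminf)
  also have "\<dots> \<le> liminf (\<lambda>n. rate_I G (Q2n n) (Q1n n))"
  proof (intro Liminf_mono always_eventually allI)
    fix n
    have "t *\<^sub>R Q0 \<in> sym_mats" using Q0 by (simp add: sym_mats_def transpose_scalar)
    then show "T n \<le> rate_I G (Q2n n) (Q1n n)" unfolding T_def using rate_I_ge by fastforce
  qed
  finally show ?thesis .
qed

lemma liminf_rate_I_ge_term:
  fixes G :: "real^'d \<Rightarrow> real^'e^'e"
  assumes lip: "asym_quad_lipschitz G" and Q1n: "\<And>n. Q1n n \<in> psd_mats" "Q1n \<longlonglongrightarrow> Q1"
    and Q1: "Q1 \<in> psd_mats" and Q2n: "Q2n \<longlonglongrightarrow> Q2" and Q0: "Q0 \<in> sym_mats"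
  shows "ereal (Q0 \<bullet> Q2) - ereal_log (mgf_M G Q0 Q1) \<le> liminf (\<lambda>n. rate_I G (Q2n n) (Q1n n))"
proof (cases "mgf_M G Q0 Q1 = \<infinity>")
  case True
  then show ?thesis by (simp add: ereal_log_def)
next
  case False
  have cG: "continuous_on UNIV G" using lip by (simp add: asym_quad_lipschitz_def)
  define m where "m = enn2real (mgf_M G Q0 Q1)"
  define \<gamma> where "\<gamma> = enn2real (emeasure (std_gauss :: (real^'d) measure) UNIV)"
  have M: "mgf_M G Q0 Q1 = ennreal m" "m > 0"
    using False mgf_M_pos[OF cG] by (auto simp: m_def less_top enn2real_positive_iff)
  have \<gamma>: "emeasure (std_gauss :: (real^'d) measure) UNIV = ennreal \<gamma>" "\<gamma> \<ge> 0"
    using emeasure_std_gauss_finite[where 'd='d] by (simp_all add: \<gamma>_def less_top)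
  let ?L = "liminf (\<lambda>n. rate_I G (Q2n n) (Q1n n))"
  have le: "ereal (t * (Q0 \<bullet> Q2) - ln (t * m + (1 - t) * \<gamma>)) \<le> ?L" if t: "0 < t" "t < 1" for t
  proof -
    have pos: "t * m + (1 - t) * \<gamma> > 0" using t M \<gamma> by (simp add: add_pos_nonneg)
    have "mgf_M G (t *\<^sub>R Q0) Q1 \<le> ennreal (t * m + (1 - t) * \<gamma>)"
      using mgf_M_scaleR_le[OF cG, of t Q0 Q1] t M \<gamma>
      by (simp add: ennreal_mult'[symmetric] ennreal_plus[symmetric] del: ennreal_plus)
    then have log_le: "ereal_log (mgf_M G (t *\<^sub>R Q0) Q1) \<le> ereal (ln (t * m + (1 - t) * \<gamma>))"
      using ereal_log_mono ereal_log_ennreal[OF pos] by metis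
    have "ereal (t * (Q0 \<bullet> Q2) - ln (t * m + (1 - t) * \<gamma>))
        \<le> ereal (t * (Q0 \<bullet> Q2)) - ereal_log (mgf_M G (t *\<^sub>R Q0) Q1)"
      using ereal_minus_mono[OF order.refl log_le, of "ereal (t * (Q0 \<bullet> Q2))"] by simp
    also have "\<dots> \<le> ?L"
      using liminf_rate_I_ge_scaled[OF lip Q1n Q1 Q2n Q0 _ t] False by (simp add: less_top)
    finally show ?thesis .
  qed
  have "((\<lambda>t. t * (Q0 \<bullet> Q2) - ln (t * m + (1 - t) * \<gamma>))
      \<longlongrightarrow> 1 * (Q0 \<bullet> Q2) - ln (1 * m + (1 - 1) * \<gamma>)) (at_left 1)"
    using M by (intro tendsto_intros) auto
  then have lim: "((\<lambda>t. ereal (t * (Q0 \<bullet> Q2) - ln (t * m + (1 - t) * \<gamma>)))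
      \<longlongrightarrow> ereal (Q0 \<bullet> Q2 - ln m)) (at_left 1)"
    by (intro tendsto_ereal) simp
  have "eventually (\<lambda>t. ereal (t * (Q0 \<bullet> Q2) - ln (t * m + (1 - t) * \<gamma>)) \<le> ?L) (at_left 1)"
    using eventually_at_left_real[of 0 1] by (rule eventually_mono) (use le in auto)
  then have "ereal (Q0 \<bullet> Q2 - ln m) \<le> ?L"
    by (rule tendsto_le[OF trivial_limit_at_left_real tendsto_const lim])
  then show ?thesis by (simp add: M ereal_log_ennreal)
qed

theorem mainTheorem15:
  fixes G :: "real^'d \<Rightarrow> real^'e^'e"
    and Q1n :: "nat \<Rightarrow> real^'d^'d" and Q2n :: "nat \<Rightarrow> real^'e^'e"
    and Q1 :: "real^'d^'d" and Q2 :: "real^'e^'e"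
  assumes G_psd: "\<And>z. G z \<in> psd_mats"
    and G_lip: "asym_quad_lipschitz G"
    and Q1n_psd: "\<And>n. Q1n n \<in> psd_mats" and Q2n_sym: "\<And>n. Q2n n \<in> sym_mats"
    and Q1_psd: "Q1 \<in> psd_mats" and Q2_sym: "Q2 \<in> sym_mats"
    and conv1: "Q1n \<longlonglongrightarrow> Q1" and conv2: "Q2n \<longlonglongrightarrow> Q2"
  shows "liminf (\<lambda>n. rate_I G (Q2n n) (Q1n n)) \<ge> rate_I G Q2 Q1"
proof -
  have "rate_I G Q2 Q1 = (SUP Q0\<in>sym_mats. ereal (Q0 \<bullet> Q2) - ereal_log (mgf_M G Q0 Q1))"
    by (simp add: rate_I_def trace_transpose_mult)
  also have "\<dots> \<le> liminf (\<lambda>n. rate_I G (Q2n n) (Q1n n))"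
    by (rule SUP_least) (rule liminf_rate_I_ge_term[OF G_lip Q1n_psd conv1 Q1_psd conv2])
  finally show ?thesis .
qed

end
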